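(* Let $\mathcal{P}$ be a process LTS and $\mathcal{E}$ an environment LTS. For all image-finite environments $e$ and all image-finite processes $p,q$: (1) $p\le^{ji}_e q \iff p\le_e q \iff \mathcal{L}(p)\cap\mathcal{L}(e)\subseteq\mathcal{L}(q)\cap\mathcal{L}(e)$; (2) $p\simeq^{ji}_e q \iff p\simeq_e q \iff \mathcal{L}(p)\cap\mathcal{L}(e)=\mathcal{L}(q)\cap\mathcal{L}(e)$. The implications from left to right (from $p\le_e q$, resp. $p\simeq_e q$, to the formula conditions) hold also for $p,q,e$ that are not image-finite.
   Context: A labeled transition system (LTS) is a triple $\langle \mathrm{St},A,\to\rangle$ with states, actions, and transitions $s\xrightarrow{a}t$. A process LTS $\mathcal{P}=\langle \mathrm{Pr},A,\to\rangle$ has states called processes; an environment LTS $\mathcal{E}=\langle\mathrm{Env},A,\Rightarrow\rangle$ has states called environments, transitions $e\xRightarrow{a}e'$. A state is image-finite if every state reachable from it has, for each action $a$, only finitely many $a$-successors. A simulation is a nonempty relation $S$ on states such that $s\,S\,t$ and $s\xrightarrow{a}s'$ imply some $t\xrightarrow{a}t'$ with $s'\,S\,t'$; $s\le t$ iff some simulation relates $s$ to $t$. An $\mathcal{E}$-parameterized simulation on $\mathcal{P}$ is a family $(S_f)_{f\in\mathrm{Env}}$ of nonempty relations on $\mathrm{Pr}$ such that whenever $p\,S_e\,q$, $e\xRightarrow{a}e'$ and $p\xrightarrow{a}p'$, there is $q'$ with $q\xrightarrow{a}q'$ and $p'\,S_{e'}\,q'$. $p\le_e q$ iff some such family has $p\,S_e\,q$;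 $p\simeq_e q$ iff $p\le_e q$ and $q\le_e p$. The join LTS $\mathcal{P}\mathbin{\&}\mathcal{E}$ has states $p\mathbin{\&}e$ and transitions $p\mathbin{\&}e\xrightarrow{a}p'\mathbin{\&}e'$ iff $p\xrightarrow{a}p'$ and $e\xRightarrow{a}e'$. $p\le^{ji}_e q$ iff $p\mathbin{\&}e\le q\mathbin{\&}e$; $p\simeq^{ji}_e q$ iff $p\le^{ji}_e q$ and $q\le^{ji}_e p$. Positive formulas $\mathcal{L}$ over $A$: $\phi::=\top\mid\phi\wedge\phi\mid\langle a\rangle\phi$. Satisfaction: $s\models\top$ always; $s\models\phi_1\wedge\phi_2$ iff both; $s\models\langle a\rangle\phi$ iff some $s\xrightarrow{a}s'$ with $s'\models\phi$ (in the LTS containing $s$). $\mathcal{L}(s)=\{\phi\in\mathcal{L}: s\models\phi\}$. *)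

theory Defs
  imports Main
begin

type_synonym ('s, 'a) lts = "'s \<Rightarrow> 'a \<Rightarrow> 's \<Rightarrow> bool"

definition reachable :: "('s, 'a) lts \<Rightarrow> 's \<Rightarrow> 's \<Rightarrow> bool" where
  "reachable T = (\<lambda>x y. \<exists>a. T x a y)\<^sup>*\<^sup>*"

definition image_finite :: "('s, 'a) lts \<Rightarrow> 's \<Rightarrow> bool" where
  "image_finite T s \<longleftrightarrow> (\<forall>s'. reachable T s s' \<longrightarrow> (\<forall>a. finite {t. T s' a t}))"

definition simulation :: "('s, 'a) lts \<Rightarrow> ('s \<times> 's) set \<Rightarrow> bool" where
  "simulation T S \<longleftrightarrow> S \<noteq> {} \<and>
     (\<forall>s t a s'. (s, t) \<in> S \<longrightarrow> T s a s' \<longrightarrow> (\<exists>t'. T t a t' \<and> (s', t') \<in> S))"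

definition similar :: "('s, 'a) lts \<Rightarrow> 's \<Rightarrow> 's \<Rightarrow> bool" where
  "similar T s t \<longleftrightarrow> (\<exists>S. simulation T S \<and> (s, t) \<in> S)"

definition param_simulation ::
  "('p, 'a) lts \<Rightarrow> ('e, 'a) lts \<Rightarrow> ('e \<Rightarrow> ('p \<times> 'p) set) \<Rightarrow> bool" where
  "param_simulation P E S \<longleftrightarrow> (\<forall>f. S f \<noteq> {}) \<and>
     (\<forall>p q e e' a p'. (p, q) \<in> S e \<longrightarrow> E e a e' \<longrightarrow> P p a p' \<longrightarrow>
        (\<exists>q'. P q a q' \<and> (p', q') \<in> S e'))"

definition param_le :: "('p, 'a) lts \<Rightarrow> ('e, 'a) lts \<Rightarrow> 'e \<Rightarrow> 'p \<Rightarrow> 'p \<Rightarrow> bool" where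
  "param_le P E e p q \<longleftrightarrow> (\<exists>S. param_simulation P E S \<and> (p, q) \<in> S e)"

definition param_eq :: "('p, 'a) lts \<Rightarrow> ('e, 'a) lts \<Rightarrow> 'e \<Rightarrow> 'p \<Rightarrow> 'p \<Rightarrow> bool" where
  "param_eq P E e p q \<longleftrightarrow> param_le P E e p q \<and> param_le P E e q p"

definition join :: "('p, 'a) lts \<Rightarrow> ('e, 'a) lts \<Rightarrow> ('p \<times> 'e, 'a) lts" where
  "join P E = (\<lambda>(p, e) a (p', e'). P p a p' \<and> E e a e')"

definition ji_le :: "('p, 'a) lts \<Rightarrow> ('e, 'a) lts \<Rightarrow> 'e \<Rightarrow> 'p \<Rightarrow> 'p \<Rightarrow> bool" where
  "ji_le P E e p q \<longleftrightarrow> similar (join P E) (p, e) (q, e)"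

definition ji_eq :: "('p, 'a) lts \<Rightarrow> ('e, 'a) lts \<Rightarrow> 'e \<Rightarrow> 'p \<Rightarrow> 'p \<Rightarrow> bool" where
  "ji_eq P E e p q \<longleftrightarrow> ji_le P E e p q \<and> ji_le P E e q p"

datatype 'a form = Top | Conj "'a form" "'a form" | Dia 'a "'a form"

fun sat :: "('s, 'a) lts \<Rightarrow> 's \<Rightarrow> 'a form \<Rightarrow> bool" where
  "sat T s Top = True"
| "sat T s (Conj \<phi> \<psi>) = (sat T s \<phi> \<and> sat T s \<psi>)"
| "sat T s (Dia a \<phi>) = (\<exists>s'. T s a s' \<and> sat T s' \<phi>)"

definition formulas :: "('s, 'a) lts \<Rightarrow> 's \<Rightarrow> 'a form set" where
  "formulas T s = {\<phi>. sat T s \<phi>}"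

end

theory Submission
  imports Defs
begin

(* Satisfaction in the join is satisfaction in both components, and simulations preserve
   positive formulas; hence both p \<le>_e q and p \<le>ji_e q imply L(p) \<inter> L(e) \<subseteq> L(q).
   Conversely, inclusion relative to e is itself an e-parameterized simulation as soon as q is
   image-finite: if no a-successor q' of q matched p' under e', then, picking for each of the
   finitely many q' a formula of p' and e' failing at q', the formula <a>(conjunction of these)
   would hold at p and e but not at q. *)

lemma sat_join_iff: "sat (join P E) (p, e) \<phi> \<longleftrightarrow> sat P p \<phi> \<and> sat E e \<phi>"
proof (induction \<phi> arbitrary: p e)
  case (Dia a \<phi>)
  show ?case
  proof
    assume "sat (join P E) (p, e) (Dia a \<phi>)"
    then obtain s' where "join P E (p, e) a s'" "sat (join P E) s' \<phi>" by auto
    then show "sat P p (Dia a \<phi>) \<and> sat E e (Dia a \<phi>)"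
      using Dia by (cases s') (auto simp: join_def)
  next
    assume "sat P p (Dia a \<phi>) \<and> sat E e (Dia a \<phi>)"
    then obtain p' e' where "P p a p'" "sat P p' \<phi>" "E e a e'" "sat E e' \<phi>" by auto
    then show "sat (join P E) (p, e) (Dia a \<phi>)"
      using Dia by (auto simp: join_def intro!: exI[of _ "(p', e')"])
  qed
qed auto

lemma formulas_join: "formulas (join P E) (p, e) = formulas P p \<inter> formulas E e"
  by (auto simp: formulas_def sat_join_iff)

lemma simulation_sat:
  assumes "simulation T S" "(s, t) \<in> S" "sat T s \<phi>"
  shows "sat T t \<phi>"
  using assms(2,3)
proof (induction \<phi> arbitrary: s t)
  case (Dia a \<phi>)
  then obtain s' where "T s a s'" "sat T s' \<phi>" by auto
  with Dia.prems assms(1) obtain t' where "T t a t'" "(s', t') \<in> S"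
    unfolding simulation_def by blast
  with Dia.IH \<open>sat T s' \<phi>\<close> show ?case by auto
qed auto

lemma similar_formulas_subset: "similar T s t \<Longrightarrow> formulas T s \<subseteq> formulas T t"
  unfolding similar_def formulas_def by (auto intro: simulation_sat)

lemma ji_le_formulas_subset:
  "ji_le P E e p q \<Longrightarrow> formulas P p \<inter> formulas E e \<subseteq> formulas P q \<inter> formulas E e"
  unfolding ji_le_def by (metis formulas_join similar_formulas_subset)

lemma param_le_imp_ji_le:
  assumes "param_le P E e p q"
  shows "ji_le P E e p q"
proof -
  from assms obtain S where S: "param_simulation P E S" "(p, q) \<in> S e"
    unfolding param_le_def by blast
  define R where "R = {((p, f), (q, f')). f = f' \<and> (p, q) \<in> S f}"
  have "simulation (join P E) R"
    unfolding simulation_def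
  proof (intro conjI allI impI)
    show "R \<noteq> {}" using S(2) by (auto simp: R_def)
  next
    fix s t a s'
    assume "(s, t) \<in> R" "join P E s a s'"
    then obtain p1 q1 f p1' f' where eq: "s = (p1, f)" "t = (q1, f)" "s' = (p1', f')"
      and step: "(p1, q1) \<in> S f" "P p1 a p1'" "E f a f'"
      by (cases s; cases t; cases s') (auto simp: R_def join_def)
    then obtain q1' where "P q1 a q1'" "(p1', q1') \<in> S f'"
      using S(1) unfolding param_simulation_def by blast
    then show "\<exists>t'. join P E t a t' \<and> (s', t') \<in> R"
      using eq step by (auto simp: R_def join_def intro!: exI[of _ "(q1', f')"])
  qed
  moreover have "((p, e), (q, e)) \<in> R" using S(2) by (auto simp: R_def)
  ultimately show ?thesis unfolding ji_le_def similar_def by blast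
qed

lemma image_finite_finite_successors: "image_finite T s \<Longrightarrow> finite {t. T s a t}"
  unfolding image_finite_def reachable_def by blast

lemma image_finite_successor:
  assumes "image_finite T s" "T s a s'"
  shows "image_finite T s'"
proof -
  have "reachable T s t" if "reachable T s' t" for t
    using assms(2) that unfolding reachable_def by (blast intro: converse_rtranclp_into_rtranclp)
  with assms(1) show ?thesis unfolding image_finite_def by blast
qed

lemma sat_foldr_Conj: "sat T s (foldr Conj \<phi>s Top) \<longleftrightarrow> (\<forall>\<phi>\<in>set \<phi>s. sat T s \<phi>)"
  by (induction \<phi>s) auto

lemma formulas_subset_step:
  assumes incl: "formulas P p \<inter> formulas E e \<subseteq> formulas P q"
    and fin: "finite {q'. P q a q'}" and "E e a e'" "P p a p'"
  shows "\<exists>q'. P q a q' \<and> formulas P p' \<inter> formulas E e' \<subseteq> formulas P q'"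
proof (rule ccontr)
  assume "\<not> ?thesis"
  then have "\<forall>q'\<in>{q'. P q a q'}. \<exists>\<phi>. \<phi> \<in> formulas P p' \<inter> formulas E e' - formulas P q'"
    by blast
  then obtain g where g: "\<And>q'. P q a q' \<Longrightarrow> g q' \<in> formulas P p' \<inter> formulas E e' - formulas P q'"
    by (metis bchoice mem_Collect_eq)
  obtain \<phi>s where \<phi>s: "set \<phi>s = g ` {q'. P q a q'}"
    using finite_list[OF finite_imageI[OF fin, of g]] by blast
  define \<psi> where "\<psi> = foldr Conj \<phi>s Top"
  have "sat P p' \<psi>" "sat E e' \<psi>"
    unfolding \<psi>_def sat_foldr_Conj \<phi>s using g by (simp_all add: formulas_def)
  then have "Dia a \<psi> \<in> formulas P p \<inter> formulas E e"
    using assms(3,4) unfolding formulas_def by auto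
  then have "sat P q (Dia a \<psi>)" using incl unfolding formulas_def by blast
  then obtain q' where "P q a q'" "sat P q' \<psi>" by auto
  then show False
    using g[of q'] unfolding \<psi>_def sat_foldr_Conj \<phi>s formulas_def by blast
qed

lemma formulas_subset_imp_param_le:
  assumes "image_finite P q" "formulas P p \<inter> formulas E e \<subseteq> formulas P q \<inter> formulas E e"
  shows "param_le P E e p q"
proof -
  \<comment> \<open>Id only makes every S f nonempty, as a parameterized simulation requires.\<close>
  define S where
    "S f = {(p, q). image_finite P q \<and> formulas P p \<inter> formulas E f \<subseteq> formulas P q} \<union> Id"
    for f
  have "param_simulation P E S"
    unfolding param_simulation_def
  proof (intro conjI allI impI)
    fix f show "S f \<noteq> {}" by (auto simp: S_def)
  next
    fix p q f f' a p'
    assume "(p, q) \<in> S f" and "E f a f'" "P p a p'"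
    then consider "p = q" | "image_finite P q" "formulas P p \<inter> formulas E f \<subseteq> formulas P q"
      by (auto simp: S_def)
    then show "\<exists>q'. P q a q' \<and> (p', q') \<in> S f'"
    proof cases
      case 1
      then show ?thesis using \<open>P p a p'\<close> by (auto simp: S_def)
    next
      case 2
      then obtain q' where "P q a q'" "formulas P p' \<inter> formulas E f' \<subseteq> formulas P q'"
        using formulas_subset_step image_finite_finite_successors \<open>E f a f'\<close> \<open>P p a p'\<close>
        by metis
      with 2 show ?thesis by (auto simp: S_def intro: image_finite_successor)
    qed
  qed
  moreover have "(p, q) \<in> S e" using assms by (auto simp: S_def)
  ultimately show ?thesis unfolding param_le_def by blast
qed

lemma param_le_formulas_subset:
  "param_le P E e p q \<Longrightarrow> formulas P p \<inter> formulas E e \<subseteq> formulas P q \<inter> formulas E e"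
  by (intro ji_le_formulas_subset param_le_imp_ji_le)

lemma param_le_iff_formulas_subset:
  "image_finite P q \<Longrightarrow>
    param_le P E e p q \<longleftrightarrow> formulas P p \<inter> formulas E e \<subseteq> formulas P q \<inter> formulas E e"
  using param_le_formulas_subset formulas_subset_imp_param_le by (rule iffI)

lemma ji_le_iff_param_le: "image_finite P q \<Longrightarrow> ji_le P E e p q \<longleftrightarrow> param_le P E e p q"
  by (metis param_le_imp_ji_le ji_le_formulas_subset formulas_subset_imp_param_le)

theorem theorem4p2:
  fixes P :: "('p, 'a) lts" and E :: "('e, 'a) lts"
  shows "(\<forall>e p q. image_finite E e \<longrightarrow> image_finite P p \<longrightarrow> image_finite P q \<longrightarrow>
            (ji_le P E e p q \<longleftrightarrow> param_le P E e p q) \<and>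
            (param_le P E e p q \<longleftrightarrow>
               formulas P p \<inter> formulas E e \<subseteq> formulas P q \<inter> formulas E e) \<and>
            (ji_eq P E e p q \<longleftrightarrow> param_eq P E e p q) \<and>
            (param_eq P E e p q \<longleftrightarrow>
               formulas P p \<inter> formulas E e = formulas P q \<inter> formulas E e))
       \<and> (\<forall>e p q. param_le P E e p q \<longrightarrow>
               formulas P p \<inter> formulas E e \<subseteq> formulas P q \<inter> formulas E e)
       \<and> (\<forall>e p q. param_eq P E e p q \<longrightarrow>
               formulas P p \<inter> formulas E e = formulas P q \<inter> formulas E e)"
proof (intro conjI allI impI)
  fix e p q
  assume "image_finite P p" "image_finite P q"
  then show "ji_le P E e p q \<longleftrightarrow> param_le P E e p q"
    and "param_le P E e p q \<longleftrightarrow> formulas P p \<inter> formulas E e \<subseteq> formulas P q \<inter> formulas E e"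
    and "ji_eq P E e p q \<longleftrightarrow> param_eq P E e p q"
    and "param_eq P E e p q \<longleftrightarrow> formulas P p \<inter> formulas E e = formulas P q \<inter> formulas E e"
    unfolding ji_eq_def param_eq_def
    by (simp_all add: ji_le_iff_param_le param_le_iff_formulas_subset set_eq_subset)
next
  fix e p q
  show "param_le P E e p q \<Longrightarrow> formulas P p \<inter> formulas E e \<subseteq> formulas P q \<inter> formulas E e"
    by (rule param_le_formulas_subset)
  show "param_eq P E e p q \<Longrightarrow> formulas P p \<inter> formulas E e = formulas P q \<inter> formulas E e"
    unfolding param_eq_def by (blast dest: param_le_formulas_subset)
qed

end
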